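(* In any execution of $\mathcal{U}$, let $p$ be a process and suppose $H_p = (t, r)$ at time $T$ with $r \neq NULL$. Then for all times $T' \geq T$, if $H_p.time = t$ at $T'$ then $H_p.response = r$ at $T'$.
   Context: Model: an asynchronous shared-memory system with possibly infinitely many processes, any of which may crash, communicating via atomic shared objects. A fetch-and-increment (F\&I) object stores an integer; F\&I$(C)$ atomically returns the current value and increments it. A generalized-compare-and-swap (GCAS) object $O$ stores a value and supports Read$(O)$ and GCAS$(c, O, v_1, v_2)$, which atomically does: if $c(\text{current value of } O, v_1)$ holds then set $O := v_2$ and return true, else return false. Tuples are compared componentwise for $=$; GCAS$(>, A, (t,-,-), v)$ succeeds iff the time field of $A$ is strictly greater than $t$. Implemented type $\mathcal{T} = (OP, RES, Q, \delta)$ with initial state $s_0$; a procedure $apply_{\mathcal{T}}(o,s)$ returns some $(s',r)$ with $(s,o,s',r)\in\delta$. $NULL$ is a value different from every response of $\mathcal{T}$, and $NOOP$ is a name different from every operation of $\mathcal{T}$. Algorithm $\mathcal{U}$: each process $p$ owns a GCAS object $H_p$ with fields $(time, response)$. Shared objects: F\&I object $C$, initially $1$; GCAS object $A$ with fields $(time, op, ptr)$, initially $(0, NOOP, h(NOOP))$, where $h(NOOP)$ is a pointer to an immutable location containing $(0,\perp)$; GCAS object $S$ with fields $(time, state, response, ptr)$, initially $(0, s_0, \perp, h(NOOP))$. Process $p$ performs operation $o$ by calling DoOp$(o)$: (1) DoOp$(o)$ invoked; (2) $t := $ F\&I$(C)$; (3) $H_p := (t, NULL)$; (4) while $H_p =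 (t, NULL)$ do: (5) $(t^*, s^*, r^*, roptr^* ) := S$; (6) GCAS$(=, *roptr^*, (t^*, NULL), (t^*, r^* ))$; (7) GCAS$(>, A, (t,-,-), (t, o, \&H_p))$; (8) $(t', o', roptr') := A$; (9) $(\hat t, \hat r) := *roptr'$; (10) if $(\hat t,\hat r) = (t', NULL)$ then (11) $(s', r') := apply_{\mathcal{T}}(o', s^* )$; (12) GCAS$(=, S, (t^*,s^*,r^*,roptr^* ), (t', s', r', roptr'))$; (13) else GCAS$(=, A, (t', o', roptr'), (t, o, \&H_p))$; end while; (14) return $H_p.response$. *)

theory Defs
  imports Main
begin

text \<open>Processes have an arbitrary (possibly infinite) type 'p.
  Operations of the implemented type have type 'o, states 's, responses 'r;
  the sequential specification is the relation delta of tuples (s, o, s', r).\<close>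

datatype 'o opx = NOOP | Op 'o

text \<open>Values stored in response fields: NULL, the initial value bottom, or a response.\<close>
datatype 'r rv = Null | Bot | Resp 'r

text \<open>Pointers: h(NOOP) (immutable location holding (0,bottom)) or the address of H_q.\<close>
datatype 'p ptr = HNoop | HP 'p

datatype pcv = Idle | L2 | L3 | L4 | L5 | L6 | L7 | L8 | L9 | L10 | L11 | L12 | L13 | L14

record ('p, 'o, 's, 'r) loc =
  pc    :: pcv
  lop   :: 'o          \<comment> \<open>o\<close>
  lt    :: nat         \<comment> \<open>t\<close>
  ts    :: nat         \<comment> \<open>t*\<close>
  ss    :: 's          \<comment> \<open>s*\<close>
  rs    :: "'r rv"     \<comment> \<open>r*\<close>
  ps    :: "'p ptr"    \<comment> \<open>roptr*\<close>
  tp    :: nat         \<comment> \<open>t'\<close>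
  opp   :: "'o opx"    \<comment> \<open>o'\<close>
  pp    :: "'p ptr"    \<comment> \<open>roptr'\<close>
  th    :: nat         \<comment> \<open>t hat\<close>
  rh    :: "'r rv"     \<comment> \<open>r hat\<close>
  sn    :: 's          \<comment> \<open>s'\<close>
  rn    :: 'r          \<comment> \<open>r'\<close>

record ('p, 'o, 's, 'r) cfg =
  Cv  :: nat
  Av  :: "nat \<times> 'o opx \<times> 'p ptr"
  Sv  :: "nat \<times> 's \<times> 'r rv \<times> 'p ptr"
  H   :: "'p \<Rightarrow> nat \<times> 'r rv"
  L   :: "'p \<Rightarrow> ('p, 'o, 's, 'r) loc"

definition deref :: "('p \<Rightarrow> nat \<times> 'r rv) \<Rightarrow> 'p ptr \<Rightarrow> nat \<times> 'r rv" where
  "deref h x = (case x of HNoop \<Rightarrow> (0, Bot) | HP q \<Rightarrow> h q)"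

definition init_cfg :: "'s \<Rightarrow> ('p, 'o, 's, 'r) cfg \<Rightarrow> bool" where
  "init_cfg s0 c \<longleftrightarrow> Cv c = 1 \<and> Av c = (0, NOOP, HNoop) \<and> Sv c = (0, s0, Bot, HNoop)
     \<and> (\<forall>q. H c q = (0, Bot)) \<and> (\<forall>q. pc (L c q) = Idle)"

text \<open>One atomic step of process p (one numbered line of DoOp).\<close>
definition step :: "('s \<times> 'o \<times> 's \<times> 'r) set \<Rightarrow> 'p \<Rightarrow> ('p, 'o, 's, 'r) cfg \<Rightarrow> ('p, 'o, 's, 'r) cfg \<Rightarrow> bool" where
  "step \<delta> p c c' \<longleftrightarrow> (let l = L c p; setl = (\<lambda>c0 l'. c0\<lparr>L := (L c0)(p := l')\<rparr>) in
    case pc l of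
      Idle \<Rightarrow> (\<exists>oo. c' = setl c (l\<lparr>pc := L2, lop := oo\<rparr>))
    | L2 \<Rightarrow> c' = setl (c\<lparr>Cv := Cv c + 1\<rparr>) (l\<lparr>pc := L3, lt := Cv c\<rparr>)
    | L3 \<Rightarrow> c' = setl (c\<lparr>H := (H c)(p := (lt l, Null))\<rparr>) (l\<lparr>pc := L4\<rparr>)
    | L4 \<Rightarrow> c' = setl c (l\<lparr>pc := (if H c p = (lt l, Null) then L5 else L14)\<rparr>)
    | L5 \<Rightarrow> (case Sv c of (t1, s1, r1, p1) \<Rightarrow>
               c' = setl c (l\<lparr>pc := L6, ts := t1, ss := s1, rs := r1, ps := p1\<rparr>))
    | L6 \<Rightarrow> c' = setl (case ps l of
                         HNoop \<Rightarrow> c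
                       | HP q \<Rightarrow> (if H c q = (ts l, Null)
                                  then c\<lparr>H := (H c)(q := (ts l, rs l))\<rparr> else c))
                      (l\<lparr>pc := L7\<rparr>)
    | L7 \<Rightarrow> c' = setl (if fst (Av c) > lt l then c\<lparr>Av := (lt l, Op (lop l), HP p)\<rparr> else c)
                      (l\<lparr>pc := L8\<rparr>)
    | L8 \<Rightarrow> (case Av c of (t1, o1, p1) \<Rightarrow>
               c' = setl c (l\<lparr>pc := L9, tp := t1, opp := o1, pp := p1\<rparr>))
    | L9 \<Rightarrow> c' = setl c (l\<lparr>pc := L10, th := fst (deref (H c) (pp l)),
                                      rh := snd (deref (H c) (pp l))\<rparr>)
    | L10 \<Rightarrow> c' = setl c (l\<lparr>pc := (if (th l, rh l) = (tp l, Null) then L11 else L13)\<rparr>)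
    | L11 \<Rightarrow> (\<exists>o1 s1 r1. opp l = Op o1 \<and> (ss l, o1, s1, r1) \<in> \<delta> \<and>
               c' = setl c (l\<lparr>pc := L12, sn := s1, rn := r1\<rparr>))
    | L12 \<Rightarrow> c' = setl (if Sv c = (ts l, ss l, rs l, ps l)
                        then c\<lparr>Sv := (tp l, sn l, Resp (rn l), pp l)\<rparr> else c)
                       (l\<lparr>pc := L4\<rparr>)
    | L13 \<Rightarrow> c' = setl (if Av c = (tp l, opp l, pp l)
                        then c\<lparr>Av := (lt l, Op (lop l), HP p)\<rparr> else c)
                       (l\<lparr>pc := L4\<rparr>)
    | L14 \<Rightarrow> c' = setl c (l\<lparr>pc := Idle\<rparr>))"

text \<open>An execution: configuration at each time; each time step is either a step of
  some process or no change (so finite executions and crashes are included).\<close>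
definition execution :: "('s \<times> 'o \<times> 's \<times> 'r) set \<Rightarrow> 's \<Rightarrow> (nat \<Rightarrow> ('p, 'o, 's, 'r) cfg) \<Rightarrow> bool" where
  "execution \<delta> s0 E \<longleftrightarrow> init_cfg s0 (E 0) \<and>
     (\<forall>i. E (Suc i) = E i \<or> (\<exists>p. step \<delta> p (E i) (E (Suc i))))"

end

theory Submission
  imports Defs
begin

text \<open>Only two lines write a register H_q: line 3, executed by q itself, installs
  (t, NULL) for a fresh ticket t of the counter, and the GCAS of line 6 replaces a NULL
  response while keeping the time field. Since tickets grow strictly, the time field of
  H_p never decreases, and once H_p holds a non-NULL response r at time t it either keeps
  (t, r) or has moved on to a larger time.\<close>

definition well_stamped :: "('p, 'o, 's, 'r) cfg \<Rightarrow> bool" where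
  "well_stamped c \<longleftrightarrow> (\<forall>q. fst (H c q) < Cv c
     \<and> (pc (L c q) = L3 \<longrightarrow> fst (H c q) < lt (L c q))
     \<and> (pc (L c q) \<notin> {Idle, L2} \<longrightarrow> lt (L c q) < Cv c))"

lemma well_stamped_init: "init_cfg s0 c \<Longrightarrow> well_stamped c"
  by (simp add: init_cfg_def well_stamped_def)

lemma step_preserves_well_stamped:
  assumes "step \<delta> p c c'" "well_stamped c"
  shows "well_stamped c'"
  using assms
  by (cases "pc (L c p)")
     (auto simp: step_def Let_def well_stamped_def split: prod.splits ptr.splits if_splits,
      (metis less_SucI fst_conv)+)

lemma execution_step:
  "execution \<delta> s0 E \<Longrightarrow> E (Suc i) = E i \<or> (\<exists>p. step \<delta> p (E i) (E (Suc i)))"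
  by (simp add: execution_def)

lemma execution_well_stamped:
  assumes "execution \<delta> s0 E"
  shows "well_stamped (E i)"
proof (induction i)
  case 0
  then show ?case using assms well_stamped_init by (auto simp: execution_def)
next
  case (Suc i)
  then show ?case using execution_step[OF assms] step_preserves_well_stamped by metis
qed

lemma step_H_update:
  assumes "step \<delta> p c c'"
  shows "H c' q = H c q
    \<or> (q = p \<and> pc (L c p) = L3 \<and> H c' q = (lt (L c p), Null))
    \<or> (snd (H c q) = Null \<and> fst (H c' q) = fst (H c q))"
  using assms
  by (cases "pc (L c p)")
     (auto simp: step_def Let_def split: prod.splits ptr.splits if_splits)

definition settled :: "nat \<Rightarrow> 'r rv \<Rightarrow> nat \<times> 'r rv \<Rightarrow> bool" where
  "settled t r h \<longleftrightarrow> t < fst h \<or> h = (t, r)"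

lemma step_preserves_settled:
  assumes step: "step \<delta> p c c'" and ws: "well_stamped c"
    and settled: "settled t r (H c q)" and r: "r \<noteq> Null"
  shows "settled t r (H c' q)"
  using step_H_update[OF step, of q]
proof (elim disjE conjE)
  assume "H c' q = H c q"
  then show ?thesis using settled by simp
next
  assume "q = p" "pc (L c p) = L3" "H c' q = (lt (L c p), Null)"
  moreover have "fst (H c p) < lt (L c p)"
    using ws \<open>pc (L c p) = L3\<close> by (simp add: well_stamped_def)
  ultimately show ?thesis using settled by (auto simp: settled_def)
next
  assume "snd (H c q) = Null" "fst (H c' q) = fst (H c q)"
  then show ?thesis using settled r by (auto simp: settled_def)
qed

lemma execution_settled_persists:
  assumes exec: "execution \<delta> s0 E" and r: "r \<noteq> Null"
    and settled: "settled t r (H (E T) q)" and le: "T \<le> T'"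
  shows "settled t r (H (E T') q)"
  using le
proof (induction T' rule: dec_induct)
  case base
  then show ?case using settled .
next
  case (step i)
  then show ?case
    using execution_step[OF exec, of i] step_preserves_settled execution_well_stamped[OF exec] r
    by metis
qed

theorem mainTheorem3:
  fixes \<delta> :: "('s \<times> 'o \<times> 's \<times> 'r) set" and s0 :: 's
    and E :: "nat \<Rightarrow> ('p, 'o, 's, 'r) cfg" and p :: 'p
  assumes total: "\<forall>s oo. \<exists>s' r. (s, oo, s', r) \<in> \<delta>"
    and exec: "execution \<delta> s0 E"
    and HT: "H (E T) p = (t, r)" and notnull: "r \<noteq> Null"
    and le: "T \<le> T'"
    and time: "fst (H (E T') p) = t"
  shows "snd (H (E T') p) = r"
proof -
  have "settled t r (H (E T) p)"
    using HT by (simp add: settled_def)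
  then have "settled t r (H (E T') p)"
    using execution_settled_persists[OF exec notnull _ le] by blast
  then show ?thesis
    using time by (auto simp: settled_def)
qed

end
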